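(* Let $k$ be a non-negative integer, $m=4k+2$, and let $f$ be a natural number such that $\gcd(f,4m)=2$, $\gcd(f-1,4m)=1$, and $f^2+f-2\equiv 2m \pmod{4m}$. Then there exists a cyclic DCA$(4,4m+1;4m)$ satisfying P1 and P2.
   Context: Let $(G,+)$ be an abelian group of order $n$. A difference covering array DCA$(k,\eta;n)$ over $G$ is an $\eta\times k$ matrix $Q=[q(i,j)]$ (rows indexed $0,\dots,\eta-1$, columns $0,\dots,k-1$) with entries in $G$ such that for every pair of distinct columns $j,j'$ the multiset $\{q(i,j)-q(i,j') : 0\le i\le \eta-1\}$ contains every element of $G$ at least once. It is cyclic if $G=\mathbb{Z}_n$. A DCA$(k,n+1;n)$ is taken in normalized form: all entries of its last row (row $n$) and of its last column (column $k-1$) equal $0$. Such a DCA satisfies P1 if $0$ occurs at least twice in every column, and satisfies P2 if for all distinct columns $j,j'$ with $j\neq k-1\neq j'$, the set $\{q(i,j)-q(i,j') : 0\le i\le n-1\}$ equals $G\setminus\{0\}$. *)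

theory Defs
  imports "HOL-Number_Theory.Number_Theory"
begin

text \<open>Elements of Z_n are represented by
  integers in {0..<n}; subtraction in Z_n is integer subtraction followed by mod n.
  An eta x k matrix is a function Q with Q i j the entry in row i (i < eta), column j (j < k).\<close>

definition cyclic_DCA :: "nat \<Rightarrow> nat \<Rightarrow> nat \<Rightarrow> (nat \<Rightarrow> nat \<Rightarrow> int) \<Rightarrow> bool" where
  "cyclic_DCA k eta n Q \<longleftrightarrow>
     (\<forall>i<eta. \<forall>j<k. 0 \<le> Q i j \<and> Q i j < int n) \<and>
     (\<forall>j<k. \<forall>j'<k. j \<noteq> j' \<longrightarrow>
        (\<forall>g\<in>{0..<int n}. \<exists>i<eta. (Q i j - Q i j') mod int n = g))"

definition DCA_normalized :: "nat \<Rightarrow> nat \<Rightarrow> (nat \<Rightarrow> nat \<Rightarrow> int) \<Rightarrow> bool" where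
  "DCA_normalized k n Q \<longleftrightarrow> (\<forall>j<k. Q n j = 0) \<and> (\<forall>i<n+1. Q i (k-1) = 0)"

definition DCA_P1 :: "nat \<Rightarrow> nat \<Rightarrow> (nat \<Rightarrow> nat \<Rightarrow> int) \<Rightarrow> bool" where
  "DCA_P1 k n Q \<longleftrightarrow> (\<forall>j<k. card {i. i < n+1 \<and> Q i j = 0} \<ge> 2)"

definition DCA_P2 :: "nat \<Rightarrow> nat \<Rightarrow> (nat \<Rightarrow> nat \<Rightarrow> int) \<Rightarrow> bool" where
  "DCA_P2 k n Q \<longleftrightarrow> (\<forall>j<k. \<forall>j'<k. j \<noteq> j' \<longrightarrow> j \<noteq> k-1 \<longrightarrow> j' \<noteq> k-1 \<longrightarrow>
      (\<lambda>i. (Q i j - Q i j') mod int n) ` {0..<n} = {1..<int n})"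

end

theory Submission
  imports Defs
begin

text \<open>Write L = m = 4K + 2 and index the rows i < 4L by pairs (y, e) with i = e L + y, 0 \<le> y < L,
  e < 4. The first three columns are affine in y with slopes 1, 4, 2L - 2 and offsets depending on e;
  the last column and the extra row 4L are zero. Modulo 4L, the difference of two of the first three
  columns is a unit (3, 2L - 3 or L - 3) times an affine function of (y, e) whose values cover every
  nonzero residue, and each of the first three columns is a unit (1, 1 or L - 1) times one covering
  every residue. Multiplication by a unit permutes the (nonzero) residues, which gives P2, the
  covering property (the zero row supplies the difference 0) and P1. The multipliers 3, 2L - 3 and
  L - 3 square to 9 modulo 4L, so they are units exactly when 3 does not divide L. This is all that
  is used of f: if 3 divides m, then f^2 + f - 2 = (f - 1)^2 + 3 (f - 1) \<equiv> 2m \<equiv> 0 (mod 3)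
  forces 3 to divide gcd (f - 1) (4m).\<close>

lemma mult_mod_image_nonzero_residues:
  fixes u N :: int
  assumes "coprime u N"
  shows "(\<lambda>x. (u * x) mod N) ` {1..<N} = {1..<N}"
  using bij_betw_int_remainders_mult[OF assms] by (simp add: bij_betw_def)

lemma mult_mod_image_residues:
  fixes u N :: int
  assumes "coprime u N" "0 < N"
  shows "(\<lambda>x. (u * x) mod N) ` {0..<N} = {0..<N}"
proof -
  have "{0..<N} = insert 0 {1..<N}" using assms(2) by auto
  then show ?thesis using mult_mod_image_nonzero_residues[OF assms(1)] by simp
qed

lemma coprime_of_square_cong:
  fixes u v N :: int
  assumes "[u^2 = v^2] (mod N)" "coprime v N"
  shows "coprime u N"
proof -
  have "coprime (v^2) N" using assms(2) by simp
  then have "coprime (u^2) N" using cong_imp_coprime[OF cong_sym[OF assms(1)]] by blast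
  then show ?thesis by simp
qed

lemma image_mod_cong_unit_multiple:
  fixes u N :: int and D h :: "'a \<Rightarrow> int"
  assumes "coprime u N" "0 < N" "\<And>x. x \<in> R \<Longrightarrow> [D x = u * h x] (mod N)"
    and "(\<lambda>x. h x mod N) ` R = S" "S = {0..<N} \<or> S = {1..<N}"
  shows "(\<lambda>x. D x mod N) ` R = S"
proof -
  have "D x mod N = (u * (h x mod N)) mod N" if "x \<in> R" for x
    using assms(3)[OF that] by (simp add: cong_def mod_mult_right_eq)
  then have "(\<lambda>x. D x mod N) ` R = (\<lambda>x. (u * x) mod N) ` (\<lambda>x. h x mod N) ` R"
    by (simp add: image_image cong: image_cong)
  also have "\<dots> = (\<lambda>x. (u * x) mod N) ` S"
    using assms(4) by simp
  also have "\<dots> = S"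
    using assms(5) mult_mod_image_residues[OF assms(1,2)] mult_mod_image_nonzero_residues[OF assms(1)]
    by (elim disjE) simp_all
  finally show ?thesis .
qed

lemma image_mod_uminus:
  fixes N :: int and D :: "'a \<Rightarrow> int"
  assumes "(\<lambda>x. D x mod N) ` R = S" "0 < N" "S = {0..<N} \<or> S = {1..<N}"
  shows "(\<lambda>x. (- D x) mod N) ` R = S"
  by (rule image_mod_cong_unit_multiple[where u = "-1" and h = D]) (use assms in auto)

lemma less_4_cases: "(e::nat) < 4 \<Longrightarrow> e = 0 \<or> e = 1 \<or> e = 2 \<or> e = 3"
  by auto

definition affine_row :: "int \<Rightarrow> (nat \<Rightarrow> int) \<Rightarrow> int \<times> nat \<Rightarrow> int" where
  "affine_row a c = (\<lambda>(y, e). a * y + c e)"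

definition block_rows :: "int \<Rightarrow> (int \<times> nat) set" where
  "block_rows L = {0..<L} \<times> {..<4}"

lemma affine_row_zero [simp]: "affine_row 0 (\<lambda>_. 0) r = 0"
  by (cases r) (simp add: affine_row_def)

lemma affine_row_diff:
  "affine_row s c r - affine_row s' c' r = affine_row (s - s') (\<lambda>e. c e - c' e) r"
  by (cases r) (simp add: affine_row_def algebra_simps)

lemma affine_row_cong_mult:
  fixes N :: int
  assumes "r \<in> block_rows L" "s = u * a" "\<And>e. e < 4 \<Longrightarrow> c e = u * d e + N * q e"
  shows "[affine_row s c r = u * affine_row a d r] (mod N)"
proof -
  obtain y e where r: "r = (y, e)" "e < 4" using assms(1) by (auto simp: block_rows_def)
  then have "affine_row s c r = u * affine_row a d r + N * q e"
    using assms(2,3) by (simp add: affine_row_def algebra_simps)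
  then show ?thesis by (simp add: cong_def)
qed

lemma affine_row_mod_imageI:
  fixes a x N :: int
  assumes "0 < a" "e < 4" "c e \<le> x" "x < c e + a * L" "a dvd x - c e" "x mod N = j"
  shows "j \<in> (\<lambda>r. affine_row a c r mod N) ` block_rows L"
proof (rule rev_image_eqI)
  define y where "y = (x - c e) div a"
  have y: "a * y = x - c e" using assms(5) by (simp add: y_def)
  have "0 \<le> a * y" "a * y < a * L" using y assms(3,4) by simp_all
  then have "0 \<le> y" "y < L"
    using assms(1) by (simp_all add: zero_le_mult_iff mult_less_cancel_left_pos)
  then show "(y, e) \<in> block_rows L" using assms(2) by (simp add: block_rows_def)
  show "j = affine_row a c (y, e) mod N" using y assms(6) by (simp add: affine_row_def)
qed

lemma affine_row_mod_image_subset: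
  fixes a N :: int
  assumes "\<And>y e. 0 \<le> y \<Longrightarrow> y < L \<Longrightarrow> e < 4 \<Longrightarrow>
             1 \<le> a * y + c e \<and> a * y + c e < N"
  shows "(\<lambda>r. affine_row a c r mod N) ` block_rows L \<subseteq> {1..<N}"
proof clarify
  fix y e assume "(y, e) \<in> block_rows L"
  then have "1 \<le> a * y + c e \<and> a * y + c e < N" using assms by (simp add: block_rows_def)
  then show "affine_row a c (y, e) mod N \<in> {1..<N}" by (simp add: affine_row_def)
qed

definition block_entry :: "int \<Rightarrow> nat \<Rightarrow> int \<times> nat \<Rightarrow> int" where
  "block_entry L j =
     [affine_row 1 ((!) [0, L, 2*L, 3*L]),
      affine_row 4 ((!) [3, 3*L, L + 3, 0]),
      affine_row (2*L - 2) ((!) [2*L - 3, -3, 0, 2*L]),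
      affine_row 0 (\<lambda>_. 0)] ! j"

context
  fixes K L :: int
  assumes L_eq: "L = 4 * K + 2" and K_nonneg: "0 \<le> K"
begin

lemma affine_image_diff_1_0:
  "(\<lambda>r. affine_row 1 ((!) [1, 2*L, L + 1, 3*L]) r mod (4*L)) ` block_rows L = {1..<4*L}"
  (is "?img = _")
proof
  show "?img \<subseteq> {1..<4*L}"
    by (rule affine_row_mod_image_subset) (auto dest!: less_4_cases simp: L_eq)
  show "{1..<4*L} \<subseteq> ?img"
  proof
    fix j assume j: "j \<in> {1..<4*L}"
    consider "j \<le> L" | "L < j" "j \<le> 2*L" | "2*L < j" "j < 3*L" | "3*L \<le> j" by linarith
    then show "j \<in> ?img"
    proof cases
      case 1 with j show ?thesis
        by (intro affine_row_mod_imageI[where e = 0 and x = j]) auto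
    next
      case 2 with j show ?thesis
        by (intro affine_row_mod_imageI[where e = 2 and x = j]) auto
    next
      case 3 with j show ?thesis
        by (intro affine_row_mod_imageI[where e = 1 and x = j]) auto
    next
      case 4 with j show ?thesis
        by (intro affine_row_mod_imageI[where e = 3 and x = j]) auto
    qed
  qed
qed

lemma affine_image_diff_2_0:
  "(\<lambda>r. affine_row 1 ((!) [1, L + 1, 2*L, 3*L]) r mod (4*L)) ` block_rows L = {1..<4*L}"
  (is "?img = _")
proof
  show "?img \<subseteq> {1..<4*L}"
    by (rule affine_row_mod_image_subset) (auto dest!: less_4_cases simp: L_eq)
  show "{1..<4*L} \<subseteq> ?img"
  proof
    fix j assume j: "j \<in> {1..<4*L}"
    consider "j \<le> L" | "L < j" "j \<le> 2*L" | "2*L < j" "j < 3*L" | "3*L \<le> j" by linarith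
    then show "j \<in> ?img"
    proof cases
      case 1 with j show ?thesis
        by (intro affine_row_mod_imageI[where e = 0 and x = j]) auto
    next
      case 2 with j show ?thesis
        by (intro affine_row_mod_imageI[where e = 1 and x = j]) auto
    next
      case 3 with j show ?thesis
        by (intro affine_row_mod_imageI[where e = 2 and x = j]) auto
    next
      case 4 with j show ?thesis
        by (intro affine_row_mod_imageI[where e = 3 and x = j]) auto
    qed
  qed
qed

lemma affine_image_diff_2_1:
  "(\<lambda>r. affine_row 2 ((!) [2, 1, 2*L + 1, 2*L]) r mod (4*L)) ` block_rows L = {1..<4*L}"
  (is "?img = _")
proof
  show "?img \<subseteq> {1..<4*L}"
    by (rule affine_row_mod_image_subset) (auto dest!: less_4_cases simp: L_eq)
  show "{1..<4*L} \<subseteq> ?img"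
  proof
    fix j assume j: "j \<in> {1..<4*L}"
    consider "even j" "j \<le> 2*L" | "even j" "2*L < j" | "odd j" "j < 2*L" | "odd j" "2*L < j"
      by (cases "even j"; cases "j < 2*L"; cases "j = 2*L") auto
    then show "j \<in> ?img"
    proof cases
      case 1 with j show ?thesis
        by (intro affine_row_mod_imageI[where e = 0 and x = j]) auto
    next
      case 2 with j show ?thesis
        by (intro affine_row_mod_imageI[where e = 3 and x = j]) auto
    next
      case 3 with j show ?thesis
        by (intro affine_row_mod_imageI[where e = 1 and x = j]) auto
    next
      case 4 with j show ?thesis
        by (intro affine_row_mod_imageI[where e = 2 and x = j]) auto
    qed
  qed
qed

lemma affine_image_column_0:
  "(\<lambda>r. affine_row 1 ((!) [0, L, 2*L, 3*L]) r mod (4*L)) ` block_rows L = {0..<4*L}"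
  (is "?img = _")
proof
  show "{0..<4*L} \<subseteq> ?img"
  proof
    fix j assume j: "j \<in> {0..<4*L}"
    consider "j < L" | "L \<le> j" "j < 2*L" | "2*L \<le> j" "j < 3*L" | "3*L \<le> j" by linarith
    then show "j \<in> ?img"
    proof cases
      case 1 with j show ?thesis
        by (intro affine_row_mod_imageI[where e = 0 and x = j]) auto
    next
      case 2 with j show ?thesis
        by (intro affine_row_mod_imageI[where e = 1 and x = j]) auto
    next
      case 3 with j show ?thesis
        by (intro affine_row_mod_imageI[where e = 2 and x = j]) auto
    next
      case 4 with j show ?thesis
        by (intro affine_row_mod_imageI[where e = 3 and x = j]) auto
    qed
  qed
qed (use L_eq K_nonneg in auto)

lemma affine_image_column_1:
  "(\<lambda>r. affine_row 4 ((!) [3, 3*L, L + 3, 0]) r mod (4*L)) ` block_rows L = {0..<4*L}"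
  (is "?img = _")
proof
  show "{0..<4*L} \<subseteq> ?img"
  proof
    fix j assume j: "j \<in> {0..<4*L}"
    consider "j mod 4 = 0" | "j mod 4 = 3"
      | "j mod 4 = 2" "3*L \<le> j" | "j mod 4 = 2" "j < 3*L"
      | "j mod 4 = 1" "L + 3 \<le> j" | "j mod 4 = 1" "j < L + 3"
      by linarith
    then show "j \<in> ?img"
    proof cases
      case 1 with j show ?thesis
        by (intro affine_row_mod_imageI[where e = 3 and x = j]) auto
    next
      case 2 with j show ?thesis
        by (intro affine_row_mod_imageI[where e = 0 and x = j]) (auto, presburger+)
    next
      case 3 with j show ?thesis
        by (intro affine_row_mod_imageI[where e = 1 and x = j]) (auto simp: L_eq, presburger+)
    next
      case 4 with j show ?thesis
        by (intro affine_row_mod_imageI[where e = 1 and x = "j + 4*L"]) (auto simp: L_eq, presburger+)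
    next
      case 5 with j show ?thesis
        by (intro affine_row_mod_imageI[where e = 2 and x = j]) (auto simp: L_eq, presburger+)
    next
      case 6 with j show ?thesis
        by (intro affine_row_mod_imageI[where e = 2 and x = "j + 4*L"]) (auto simp: L_eq, presburger+)
    qed
  qed
qed (use L_eq K_nonneg in auto)

lemma affine_image_column_2:
  "(\<lambda>r. affine_row 2 ((!) [3 - L, L + 3, 0, 2*L]) r mod (4*L)) ` block_rows L = {0..<4*L}"
  (is "?img = _")
proof
  show "{0..<4*L} \<subseteq> ?img"
  proof
    fix j assume j: "j \<in> {0..<4*L}"
    consider "even j" "j < 2*L" | "even j" "2*L \<le> j"
      | "odd j" "j \<le> L + 1" | "odd j" "L + 1 < j" "j \<le> 3*L + 1" | "odd j" "3*L + 1 < j"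
      by linarith
    then show "j \<in> ?img"
    proof cases
      case 1 with j show ?thesis
        by (intro affine_row_mod_imageI[where e = 2 and x = j]) auto
    next
      case 2 with j show ?thesis
        by (intro affine_row_mod_imageI[where e = 3 and x = j]) auto
    next
      case 3 with j show ?thesis
        by (intro affine_row_mod_imageI[where e = 0 and x = j]) (auto simp: L_eq, presburger+)
    next
      case 4 with j show ?thesis
        by (intro affine_row_mod_imageI[where e = 1 and x = j]) (auto simp: L_eq, presburger+)
    next
      case 5 with j show ?thesis
        by (intro affine_row_mod_imageI[where e = 0 and x = "j - 4*L"]) (auto simp: L_eq, presburger+)
    qed
  qed
qed (use L_eq K_nonneg in auto)

lemma coprime_block_multipliers:
  assumes "\<not> 3 dvd L"
  shows "coprime 3 (4*L)" "coprime (2*L - 3) (4*L)" "coprime (L - 3) (4*L)" "coprime (L - 1) (4*L)"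
proof -
  have "coprime 3 L" "coprime (3::int) 4"
    using assms by (auto intro: prime_imp_coprime)
  then show unit_3: "coprime 3 (4*L)"
    by simp
  show "coprime (2*L - 3) (4*L)"
    by (rule coprime_of_square_cong[OF _ unit_3])
       (simp add: cong_iff_lin power2_eq_square, rule exI[of _ "3 - L"], simp add: algebra_simps)
  show "coprime (L - 3) (4*L)"
    by (rule coprime_of_square_cong[OF _ unit_3])
       (simp add: cong_iff_lin power2_eq_square, rule exI[of _ "1 - K"], simp add: L_eq algebra_simps)
  show "coprime (L - 1) (4*L)"
    by (rule coprime_of_square_cong[of _ 1])
       (simp_all add: cong_iff_lin power2_eq_square, rule exI[of _ "- K"], simp add: L_eq algebra_simps)
qed

lemma block_difference_image_ordered:
  assumes "\<not> 3 dvd L" "(j, j') \<in> {(1, 0), (2, 0), (2, 1), (0, 3), (1, 3), (2, 3)}"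
  shows "(\<lambda>r. (block_entry L j r - block_entry L j' r) mod (4*L)) ` block_rows L
           = (if j = 3 \<or> j' = 3 then {0..<4*L} else {1..<4*L})"
proof -
  have N: "0 < 4*L" using L_eq K_nonneg by simp
  note units = coprime_block_multipliers[OF assms(1)]
  define diff_image
    where "diff_image j j' =
             (\<lambda>r. (block_entry L j r - block_entry L j' r) mod (4*L)) ` block_rows L"
    for j j'
  have "diff_image 1 0 = {1..<4*L}"
    unfolding diff_image_def
    by (rule image_mod_cong_unit_multiple[OF units(1) N _ affine_image_diff_1_0])
       (simp add: block_entry_def affine_row_diff,
        rule affine_row_cong_mult[where q = "(!) [0, -1, -1, -3]"],
        auto dest!: less_4_cases)
  moreover have "diff_image 2 0 = {1..<4*L}"
    unfolding diff_image_def
    by (rule image_mod_cong_unit_multiple[OF units(2) N _ affine_image_diff_2_0])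
       (simp add: block_entry_def affine_row_diff,
        rule affine_row_cong_mult[where q = "(!) [0, -(2*K + 1), 1 - L, -(6*K + 1)]"],
        auto simp: L_eq algebra_simps dest!: less_4_cases)
  moreover have "diff_image 2 1 = {1..<4*L}"
    unfolding diff_image_def
    by (rule image_mod_cong_unit_multiple[OF units(3) N _ affine_image_diff_2_1])
       (simp add: block_entry_def affine_row_diff,
        rule affine_row_cong_mult[where q = "(!) [0, -1, -2*K, 1 - 2*K]"],
        auto simp: L_eq algebra_simps dest!: less_4_cases)
  moreover have "diff_image 0 3 = {0..<4*L}"
    unfolding diff_image_def using affine_image_column_0 by (simp add: block_entry_def)
  moreover have "diff_image 1 3 = {0..<4*L}"
    unfolding diff_image_def using affine_image_column_1 by (simp add: block_entry_def)
  moreover have "diff_image 2 3 = {0..<4*L}"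
    unfolding diff_image_def
    by (rule image_mod_cong_unit_multiple[OF units(4) N _ affine_image_column_2])
       (simp add: block_entry_def affine_row_diff,
        rule affine_row_cong_mult[where q = "(!) [K, -(K + 1), 0, -2*K]"],
        auto simp: L_eq algebra_simps dest!: less_4_cases)
  ultimately show ?thesis
    using assms(2) unfolding diff_image_def by auto
qed

lemma block_difference_image:
  assumes "\<not> 3 dvd L" "j < 4" "j' < 4" "j \<noteq> j'"
  shows "(\<lambda>r. (block_entry L j r - block_entry L j' r) mod (4*L)) ` block_rows L
           = (if j = 3 \<or> j' = 3 then {0..<4*L} else {1..<4*L})"
proof (cases "(j, j') \<in> {(1, 0), (2, 0), (2, 1), (0, 3), (1, 3), (2, 3)}")
  case True
  then show ?thesis using assms(1) by (rule block_difference_image_ordered[rotated])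
next
  case False
  then have "(j', j) \<in> {(1, 0), (2, 0), (2, 1), (0, 3), (1, 3), (2, 3)}"
    using assms(2-4) by (simp add: less_Suc_eq numeral_eq_Suc) presburger
  from block_difference_image_ordered[OF assms(1) this]
  have "(\<lambda>r. (- (block_entry L j' r - block_entry L j r)) mod (4*L)) ` block_rows L
      = (if j = 3 \<or> j' = 3 then {0..<4*L} else {1..<4*L})"
    by (intro image_mod_uminus) (use L_eq K_nonneg in auto)
  then show ?thesis by simp
qed
end

definition dca_matrix :: "nat \<Rightarrow> nat \<Rightarrow> nat \<Rightarrow> int" where
  "dca_matrix m i j =
     (if i < 4*m then block_entry (int m) j (int (i mod m), i div m) mod (4 * int m) else 0)"

lemma image_row_index: "(\<lambda>i. (int (i mod m), i div m)) ` {..<4*m} = block_rows (int m)"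
proof
  show "(\<lambda>i. (int (i mod m), i div m)) ` {..<4*m} \<subseteq> block_rows (int m)"
  proof (rule image_subsetI)
    fix i assume "i \<in> {..<4*m}"
    then have "0 < m" "i div m < 4" by (auto simp: less_mult_imp_div_less)
    then show "(int (i mod m), i div m) \<in> block_rows (int m)" by (simp add: block_rows_def)
  qed
  show "block_rows (int m) \<subseteq> (\<lambda>i. (int (i mod m), i div m)) ` {..<4*m}"
  proof clarify
    fix y e assume "(y, e) \<in> block_rows (int m)"
    then have y: "0 \<le> y" "nat y < m" and e: "e < 4" by (auto simp: block_rows_def)
    have "m * e \<le> m * 3" using e by simp
    then have "nat y + m * e < 4 * m" using y by linarith
    moreover have "(y, e) = (int ((nat y + m * e) mod m), (nat y + m * e) div m)"
      using y by simp
    ultimately show "(y, e) \<in> (\<lambda>i. (int (i mod m), i div m)) ` {..<4*m}"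
      by (intro rev_image_eqI) auto
  qed
qed

lemma dca_matrix_last_column [simp]: "dca_matrix m i 3 = 0"
  by (simp add: dca_matrix_def block_entry_def)

context
  fixes k m :: nat
  assumes m_eq: "m = 4 * k + 2" and not_3_dvd_m: "\<not> 3 dvd int m"
begin

lemma dca_matrix_difference_image:
  assumes "j < 4" "j' < 4" "j \<noteq> j'"
  shows "(\<lambda>i. (dca_matrix m i j - dca_matrix m i j') mod (4 * int m)) ` {..<4*m}
           = (if j = 3 \<or> j' = 3 then {0..<4 * int m} else {1..<4 * int m})"
proof -
  have "(\<lambda>i. (dca_matrix m i j - dca_matrix m i j') mod (4 * int m)) ` {..<4*m}
      = (\<lambda>r. (block_entry (int m) j r - block_entry (int m) j' r) mod (4 * int m))
          ` (\<lambda>i. (int (i mod m), i div m)) ` {..<4*m}"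
    by (simp add: image_image dca_matrix_def mod_diff_eq)
  also have "\<dots> = (if j = 3 \<or> j' = 3 then {0..<4 * int m} else {1..<4 * int m})"
    unfolding image_row_index using m_eq not_3_dvd_m assms
    by (intro block_difference_image[of _ "int k"]) auto
  finally show ?thesis .
qed

lemma cyclic_DCA_dca_matrix: "cyclic_DCA 4 (4*m + 1) (4*m) (dca_matrix m)"
  unfolding cyclic_DCA_def
proof (intro conjI allI impI ballI)
  fix i j
  show "0 \<le> dca_matrix m i j" "dca_matrix m i j < int (4*m)"
    using m_eq by (simp_all add: dca_matrix_def)
next
  fix j j' :: nat and g :: int
  assume jj': "j < 4" "j' < 4" "j \<noteq> j'" and g: "g \<in> {0..<int (4*m)}"
  show "\<exists>i<4*m + 1. (dca_matrix m i j - dca_matrix m i j') mod int (4*m) = g"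
  proof (cases "g = 0 \<and> j \<noteq> 3 \<and> j' \<noteq> 3")
    case True
    then show ?thesis by (intro exI[of _ "4*m"]) (simp add: dca_matrix_def)
  next
    case False
    then have "g \<in> (\<lambda>i. (dca_matrix m i j - dca_matrix m i j') mod (4 * int m)) ` {..<4*m}"
      using g dca_matrix_difference_image[OF jj'] by auto
    then obtain i where "i < 4*m" "(dca_matrix m i j - dca_matrix m i j') mod (4 * int m) = g"
      by auto
    then show ?thesis by (intro exI[of _ i]) simp
  qed
qed

lemma DCA_P1_dca_matrix: "DCA_P1 4 (4*m) (dca_matrix m)"
  unfolding DCA_P1_def
proof (intro allI impI)
  fix j :: nat assume j: "j < 4"
  obtain i where i: "i < 4*m" "dca_matrix m i j = 0"
  proof (cases "j = 3")
    case True
    then show ?thesis using m_eq by (intro that[of 0]) simp_all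
  next
    case False
    then have "0 \<in> (\<lambda>i. (dca_matrix m i j - dca_matrix m i 3) mod (4 * int m)) ` {..<4*m}"
      using dca_matrix_difference_image[OF j, of 3] m_eq by simp
    then obtain i where "i < 4*m" "dca_matrix m i j mod (4 * int m) = 0" by auto
    moreover have "dca_matrix m i j mod (4 * int m) = dca_matrix m i j"
      using m_eq by (simp add: dca_matrix_def)
    ultimately show ?thesis using that by simp
  qed
  have "dca_matrix m (4*m) j = 0" by (simp add: dca_matrix_def)
  then have "{i, 4*m} \<subseteq> {i. i < 4*m + 1 \<and> dca_matrix m i j = 0}" using i by auto
  moreover have "card {i, 4*m} = 2" using i by simp
  ultimately show "2 \<le> card {i. i < 4*m + 1 \<and> dca_matrix m i j = 0}"
    by (metis card_mono finite_Collect_conjI finite_Collect_less_nat)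
qed

lemma DCA_P2_dca_matrix: "DCA_P2 4 (4*m) (dca_matrix m)"
  unfolding DCA_P2_def
proof (intro allI impI)
  fix j j' :: nat assume "j < 4" "j' < 4" "j \<noteq> j'" "j \<noteq> 4 - 1" "j' \<noteq> 4 - 1"
  then show "(\<lambda>i. (dca_matrix m i j - dca_matrix m i j') mod int (4*m)) ` {0..<4*m}
      = {1..<int (4*m)}"
    using dca_matrix_difference_image[of j j'] by (simp add: atLeast0LessThan)
qed

end

lemma DCA_normalized_dca_matrix: "DCA_normalized 4 (4*m) (dca_matrix m)"
  by (simp add: DCA_normalized_def dca_matrix_def block_entry_def)

lemma not_3_dvd_of_gcd_cong:
  fixes f m :: int
  assumes "gcd (f - 1) (4 * m) = 1" "[f^2 + f - 2 = 2 * m] (mod 4 * m)"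
  shows "\<not> 3 dvd m"
proof
  assume "3 dvd m"
  then have "3 dvd 4 * m" by simp
  with assms(2) have "[f^2 + f - 2 = 2 * m] (mod 3)" by (rule cong_dvd_modulus)
  then have "3 dvd (f - 1)^2 + 3 * (f - 1) - 2 * m"
    by (simp add: cong_iff_dvd_diff power2_eq_square algebra_simps)
  then have "3 dvd (f - 1)^2"
    using \<open>3 dvd m\<close>
    by (metis dvd_add_left_iff dvd_diff dvd_mult dvd_triv_left diff_add_cancel)
  then have "3 dvd f - 1" by (rule prime_dvd_power[rotated]) simp
  then have "3 dvd gcd (f - 1) (4 * m)" using \<open>3 dvd m\<close> by simp
  then show False using assms(1) by simp
qed

theorem mainTheorem3:
  fixes k f m :: nat
  assumes "m = 4 * k + 2"
    and "gcd (int f) (4 * int m) = 2"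
    and "gcd (int f - 1) (4 * int m) = 1"
    and "[int f ^ 2 + int f - 2 = 2 * int m] (mod (4 * int m))"
  shows "\<exists>Q. cyclic_DCA 4 (4 * m + 1) (4 * m) Q \<and> DCA_normalized 4 (4 * m) Q
             \<and> DCA_P1 4 (4 * m) Q \<and> DCA_P2 4 (4 * m) Q"
proof -
  have "\<not> 3 dvd int m" using assms(3,4) by (rule not_3_dvd_of_gcd_cong)
  then show ?thesis
    using cyclic_DCA_dca_matrix DCA_normalized_dca_matrix DCA_P1_dca_matrix DCA_P2_dca_matrix assms(1)
    by blast
qed

end
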